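(* Let $B$ be a nonempty barrier of a $3$-connected cubic graph $G$, and let $J$ be an odd component of $G-B$. Then a vertex $v\in V(J)$ is $\lambda$-matchable in $G$ if and only if $v$ is $\lambda$-matchable in the $B$-fragment $G/\overline{V(J)}$.
   Context: A barrier of a graph $G$ with a perfect matching is a set $S\subseteq V(G)$ such that $G-S$ has exactly $|S|$ components of odd order. For an odd component $J$ of $G-B$, the $B$-fragment $G/\overline{V(J)}$ is obtained by shrinking $V(G)-V(J)$ to a single (contraction) vertex. For a vertex $v$ of a cubic graph, a $v$-matching is a spanning subgraph in which $v$ has degree $3$ and every other vertex degree $1$; $v$ is $\lambda$-matchable if a $v$-matching exists. *)

theory Defs
  imports Main
begin

definition multigraph :: "'v set \<Rightarrow> 'e set \<Rightarrow> ('e \<Rightarrow> 'v set) \<Rightarrow> bool" where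
  "multigraph V E ends \<longleftrightarrow> finite V \<and> finite E \<and>
     (\<forall>e\<in>E. ends e \<subseteq> V \<and> card (ends e) = 2)"

definition degree_in :: "'e set \<Rightarrow> ('e \<Rightarrow> 'v set) \<Rightarrow> 'v \<Rightarrow> nat" where
  "degree_in F ends v = card {e\<in>F. v \<in> ends e}"

definition cubic :: "'v set \<Rightarrow> 'e set \<Rightarrow> ('e \<Rightarrow> 'v set) \<Rightarrow> bool" where
  "cubic V E ends \<longleftrightarrow> multigraph V E ends \<and> (\<forall>v\<in>V. degree_in E ends v = 3)"

definition adj_rel :: "'e set \<Rightarrow> ('e \<Rightarrow> 'v set) \<Rightarrow> 'v set \<Rightarrow> ('v \<times> 'v) set" where
  "adj_rel E ends X = {(u, w). u \<in> X \<and> w \<in> X \<and> (\<exists>e\<in>E. ends e = {u, w})}"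

definition components :: "'e set \<Rightarrow> ('e \<Rightarrow> 'v set) \<Rightarrow> 'v set \<Rightarrow> 'v set set" where
  "components E ends X = {{w. (u, w) \<in> (adj_rel E ends X)\<^sup>*} | u. u \<in> X}"

definition connected_graph :: "'v set \<Rightarrow> 'e set \<Rightarrow> ('e \<Rightarrow> 'v set) \<Rightarrow> bool" where
  "connected_graph V E ends \<longleftrightarrow> card (components E ends V) = 1"

definition three_connected :: "'v set \<Rightarrow> 'e set \<Rightarrow> ('e \<Rightarrow> 'v set) \<Rightarrow> bool" where
  "three_connected V E ends \<longleftrightarrow> card V \<ge> 4 \<and>
     (\<forall>X. X \<subseteq> V \<and> card X \<le> 2 \<longrightarrow> connected_graph (V - X) E ends)"

definition perfect_matching :: "'v set \<Rightarrow> 'e set \<Rightarrow> ('e \<Rightarrow> 'v set) \<Rightarrow> 'e set \<Rightarrow> bool" where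
  "perfect_matching V E ends M \<longleftrightarrow> M \<subseteq> E \<and> (\<forall>v\<in>V. degree_in M ends v = 1)"

definition has_perfect_matching :: "'v set \<Rightarrow> 'e set \<Rightarrow> ('e \<Rightarrow> 'v set) \<Rightarrow> bool" where
  "has_perfect_matching V E ends \<longleftrightarrow> (\<exists>M. perfect_matching V E ends M)"

definition odd_components :: "'v set \<Rightarrow> 'e set \<Rightarrow> ('e \<Rightarrow> 'v set) \<Rightarrow> 'v set \<Rightarrow> 'v set set" where
  "odd_components V E ends S = {C \<in> components E ends (V - S). odd (card C)}"

definition barrier :: "'v set \<Rightarrow> 'e set \<Rightarrow> ('e \<Rightarrow> 'v set) \<Rightarrow> 'v set \<Rightarrow> bool" where
  "barrier V E ends S \<longleftrightarrow> S \<subseteq> V \<and> card (odd_components V E ends S) = card S"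

definition v_matching :: "'v set \<Rightarrow> 'e set \<Rightarrow> ('e \<Rightarrow> 'v set) \<Rightarrow> 'v \<Rightarrow> 'e set \<Rightarrow> bool" where
  "v_matching V E ends v F \<longleftrightarrow> F \<subseteq> E \<and>
     (\<forall>w\<in>V. degree_in F ends w = (if w = v then 3 else 1))"

definition lambda_matchable :: "'v set \<Rightarrow> 'e set \<Rightarrow> ('e \<Rightarrow> 'v set) \<Rightarrow> 'v \<Rightarrow> bool" where
  "lambda_matchable V E ends v \<longleftrightarrow> v \<in> V \<and> (\<exists>F. v_matching V E ends v F)"

text \<open>The fragment G / (V - C): vertices of C (as Some x) plus the contraction
  vertex None; edges are those with at least one end in C, with ends outside C
  mapped to None.\<close>
definition frag_V :: "'v set \<Rightarrow> 'v option set" where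
  "frag_V C = Some ` C \<union> {None}"

definition frag_E :: "'e set \<Rightarrow> ('e \<Rightarrow> 'v set) \<Rightarrow> 'v set \<Rightarrow> 'e set" where
  "frag_E E ends C = {e \<in> E. ends e \<inter> C \<noteq> {}}"

definition frag_ends :: "('e \<Rightarrow> 'v set) \<Rightarrow> 'v set \<Rightarrow> 'e \<Rightarrow> 'v option set" where
  "frag_ends ends C e = (\<lambda>x. if x \<in> C then Some x else None) ` ends e"

end

theory Submission
  imports Defs "HOL-Library.Disjoint_Sets"
begin

text \<open>
  Both directions rest on a counting fact about the barrier B: if every vertex outside B has
  odd degree in a set F of edges and every vertex of B has F-degree at most 1, then every odd
  component of G - B is left by exactly one edge of F. Indeed, each of the |B| odd components is
  left by an odd, hence positive, number of F-edges, all of them ending in B, and B absorbs at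
  most |B| of them. Applied to
  a v-matching of G, this shows that its edges meeting J form a v-matching of the fragment.
  Conversely, a v-matching of the fragment uses exactly one edge e0 leaving J. By Petersen's
  argument every edge of a 3-connected cubic graph, in particular e0, lies in a perfect
  matching M; the counting fact applied to M shows that e0 is the only edge of M leaving J, so
  the edges of M outside J complete the v-matching of the fragment to one of G.
\<close>

section \<open>Connected components of a symmetric relation\<close>

definition comp_of :: "('v \<times> 'v) set \<Rightarrow> 'v set \<Rightarrow> 'v \<Rightarrow> 'v set" where
  "comp_of A X u = {w. (u, w) \<in> (A \<inter> X \<times> X)\<^sup>*}"

definition comps :: "('v \<times> 'v) set \<Rightarrow> 'v set \<Rightarrow> 'v set set" where
  "comps A X = comp_of A X ` X"

definition odd_comps :: "('v \<times> 'v) set \<Rightarrow> 'v set \<Rightarrow> 'v set set" where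
  "odd_comps A X = {C \<in> comps A X. odd (card C)}"

lemma comp_of_self: "u \<in> comp_of A X u"
  by (simp add: comp_of_def)

lemma comp_of_subset: "u \<in> X \<Longrightarrow> comp_of A X u \<subseteq> X"
proof
  fix w assume "u \<in> X" "w \<in> comp_of A X u"
  then have "(u, w) \<in> (A \<inter> X \<times> X)\<^sup>*" "u \<in> X" by (simp_all add: comp_of_def)
  then show "w \<in> X" by (cases rule: rtranclE) auto
qed

lemma comp_of_eq:
  assumes "sym A" "w \<in> comp_of A X u"
  shows "comp_of A X w = comp_of A X u"
proof -
  have "sym ((A \<inter> X \<times> X)\<^sup>*)"
    using assms(1) by (intro sym_rtrancl) (auto simp: sym_def)
  then have "(u, w) \<in> (A \<inter> X \<times> X)\<^sup>*" "(w, u) \<in> (A \<inter> X \<times> X)\<^sup>*"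
    using assms(2) by (auto simp: comp_of_def dest: symD)
  then show ?thesis
    unfolding comp_of_def by (blast intro: rtrancl_trans)
qed

lemma comp_of_closed:
  assumes "u \<in> C" "\<And>y z. y \<in> C \<Longrightarrow> z \<in> X \<Longrightarrow> (y, z) \<in> A \<Longrightarrow> z \<in> C"
  shows "comp_of A X u \<subseteq> C"
proof
  fix w assume "w \<in> comp_of A X u"
  then have "(u, w) \<in> (A \<inter> X \<times> X)\<^sup>*" by (simp add: comp_of_def)
  then show "w \<in> C"
    by (induction rule: rtrancl_induct) (use assms in auto)
qed

lemma comp_of_subset_comp_of:
  assumes "comp_of A X u \<subseteq> Y"
  shows "comp_of A X u \<subseteq> comp_of A Y u"
proof
  fix w assume "w \<in> comp_of A X u"
  then have "(u, w) \<in> (A \<inter> X \<times> X)\<^sup>*" by (simp add: comp_of_def)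
  then have "(u, w) \<in> (A \<inter> Y \<times> Y)\<^sup>*"
  proof (induction rule: rtrancl_induct)
    case (step y z)
    then have "y \<in> Y" "z \<in> Y"
      using assms rtrancl_into_rtrancl[OF step(1,2)] by (auto simp: comp_of_def)
    then show ?case using step by (auto intro: rtrancl_into_rtrancl)
  qed simp
  then show "w \<in> comp_of A Y u" by (simp add: comp_of_def)
qed

lemma comp_of_in_comps: "u \<in> X \<Longrightarrow> comp_of A X u \<in> comps A X"
  by (simp add: comps_def)

lemma comps_subset: "C \<in> comps A X \<Longrightarrow> C \<subseteq> X"
  unfolding comps_def using comp_of_subset[THEN subsetD] by auto

lemma comps_nonempty: "C \<in> comps A X \<Longrightarrow> C \<noteq> {}"
  unfolding comps_def by (metis comp_of_self empty_iff imageE)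

lemma comps_eq_comp_of: "sym A \<Longrightarrow> C \<in> comps A X \<Longrightarrow> u \<in> C \<Longrightarrow> comp_of A X u = C"
  unfolding comps_def by (metis comp_of_eq imageE)

lemma comps_disjoint:
  assumes "sym A" "C \<in> comps A X" "D \<in> comps A X" "C \<inter> D \<noteq> {}"
  shows "C = D"
proof -
  obtain u where "u \<in> C" "u \<in> D" using assms(4) by blast
  then show ?thesis using comps_eq_comp_of[OF assms(1)] assms(2,3) by metis
qed

lemma comps_closed:
  assumes "C \<in> comps A X" "x \<in> C" "y \<in> X" "(x, y) \<in> A"
  shows "y \<in> C"
proof -
  obtain u where u: "u \<in> X" "C = comp_of A X u"
    using assms(1) by (auto simp: comps_def)
  have "x \<in> X" using comp_of_subset[OF u(1)] u(2) assms(2) by blast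
  then have "(x, y) \<in> A \<inter> X \<times> X" using assms(3,4) by blast
  moreover have "(u, x) \<in> (A \<inter> X \<times> X)\<^sup>*" using assms(2) u(2) by (simp add: comp_of_def)
  ultimately have "(u, y) \<in> (A \<inter> X \<times> X)\<^sup>*" by (rule rtrancl_into_rtrancl[rotated])
  then show ?thesis using u(2) by (simp add: comp_of_def)
qed

lemma comps_of_closed:
  assumes "C \<in> comps A X" "C \<subseteq> Y" "\<And>y z. y \<in> C \<Longrightarrow> z \<in> Y \<Longrightarrow> (y, z) \<in> A \<Longrightarrow> z \<in> C"
  shows "C \<in> comps A Y"
proof -
  obtain u where u: "u \<in> X" "C = comp_of A X u"
    using assms(1) by (auto simp: comps_def)
  have uC: "u \<in> C" using u(2) comp_of_self by metis
  have "comp_of A Y u \<subseteq> C" using comp_of_closed[of u C Y A, OF uC assms(3)] .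
  moreover have "C \<subseteq> comp_of A Y u"
    using comp_of_subset_comp_of[of A X u Y] assms(2) u(2) by simp
  ultimately have "C = comp_of A Y u" by (rule subset_antisym[rotated])
  moreover have "u \<in> Y" using uC assms(2) by blast
  ultimately show ?thesis by (simp add: comp_of_in_comps)
qed

lemma comps_Un_separated:
  assumes "sym A" "\<And>y z. y \<in> Y \<Longrightarrow> z \<in> Z \<Longrightarrow> (y, z) \<notin> A"
  shows "comps A (Y \<union> Z) = comps A Y \<union> comps A Z"
proof
  have Y_sub: "C \<in> comps A (Y \<union> Z)" if C: "C \<in> comps A Y" for C
  proof (rule comps_of_closed[OF C])
    show "C \<subseteq> Y \<union> Z" using comps_subset[OF C] by (rule le_supI1)
    fix y z assume yz: "y \<in> C" "z \<in> Y \<union> Z" "(y, z) \<in> A"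
    have "y \<in> Y" using comps_subset[OF C] yz(1) by (rule subsetD)
    then have "z \<notin> Z" using assms(2) yz(3) by metis
    then show "z \<in> C" using comps_closed[OF C yz(1) _ yz(3)] yz(2) by simp
  qed
  have Z_sub: "C \<in> comps A (Y \<union> Z)" if C: "C \<in> comps A Z" for C
  proof (rule comps_of_closed[OF C])
    show "C \<subseteq> Y \<union> Z" using comps_subset[OF C] by (rule le_supI2)
    fix y z assume yz: "y \<in> C" "z \<in> Y \<union> Z" "(y, z) \<in> A"
    have "y \<in> Z" using comps_subset[OF C] yz(1) by (rule subsetD)
    moreover have "(z, y) \<in> A" using assms(1) yz(3) by (rule symD)
    ultimately have "z \<notin> Y" using assms(2) by metis
    then show "z \<in> C" using comps_closed[OF C yz(1) _ yz(3)] yz(2) by simp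
  qed
  show "comps A Y \<union> comps A Z \<subseteq> comps A (Y \<union> Z)"
    using Y_sub Z_sub by (rule Un_least[OF subsetI subsetI])
  show "comps A (Y \<union> Z) \<subseteq> comps A Y \<union> comps A Z"
  proof
    fix D assume D: "D \<in> comps A (Y \<union> Z)"
    obtain u where u: "u \<in> D" using comps_nonempty[OF D] by blast
    define C where "C = (if u \<in> Y then comp_of A Y u else comp_of A Z u)"
    have "u \<in> Y \<union> Z" using comps_subset[OF D] u by (rule subsetD)
    then have C: "C \<in> comps A Y \<union> comps A Z"
      by (auto simp: C_def comp_of_in_comps)
    then have "C \<in> comps A (Y \<union> Z)" using Y_sub Z_sub by blast
    moreover have "u \<in> C" by (simp add: C_def comp_of_self)
    ultimately have "C = D" using comps_disjoint[OF assms(1) _ D] u by blast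
    then show "D \<in> comps A Y \<union> comps A Z" using C by simp
  qed
qed

lemma comps_Diff_subset_comp:
  assumes "sym A" "C \<in> comps A X" "T \<subseteq> C"
  shows "comps A (X - T) = comps A (C - T) \<union> comps A (X - C)"
proof -
  have "X - T = (C - T) \<union> (X - C)"
    using comps_subset[OF assms(2)] assms(3) by blast
  then have "comps A (X - T) = comps A ((C - T) \<union> (X - C))" by simp
  also have "\<dots> = comps A (C - T) \<union> comps A (X - C)"
    by (rule comps_Un_separated[OF assms(1)]) (use comps_closed[OF assms(2)] in blast)
  finally show ?thesis .
qed

lemma comps_comp:
  assumes "sym A" "C \<in> comps A X"
  shows "comps A C = {C}"
proof -
  have C: "C \<in> comps A C"
    by (rule comps_of_closed[OF assms(2) subset_refl])
      (use comps_closed[OF assms(2)] comps_subset[OF assms(2)] in blast)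
  have "D = C" if D: "D \<in> comps A C" for D
    using comps_disjoint[OF assms(1) D C] comps_subset[OF D] comps_nonempty[OF D] by blast
  then show ?thesis using C by blast
qed

lemma finite_comps: "finite X \<Longrightarrow> finite (comps A X)"
  by (simp add: comps_def)

lemma finite_odd_comps: "finite X \<Longrightarrow> finite (odd_comps A X)"
  by (simp add: odd_comps_def finite_comps)

lemma Union_comps: "\<Union> (comps A X) = X"
  using comps_subset comp_of_in_comps comp_of_self by fast

lemma card_eq_sum_card_comps:
  assumes "sym A" "finite X"
  shows "card X = (\<Sum>C\<in>comps A X. card C)"
proof -
  note Union_comps[of A X]
  moreover have "pairwise disjnt (comps A X)"
    using comps_disjoint[OF assms(1)] by (auto simp: pairwise_def disjnt_def)
  moreover have "finite C" if "C \<in> comps A X" for C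
    using comps_subset[OF that] assms(2) by (rule finite_subset)
  ultimately show ?thesis
    using card_Union_disjoint[of "comps A X"] by simp
qed

lemma odd_card_iff_odd_card_odd_comps:
  assumes "sym A" "finite X"
  shows "odd (card X) \<longleftrightarrow> odd (card (odd_comps A X))"
  using even_sum_iff[OF finite_comps[OF assms(2)], of card A]
  by (simp add: card_eq_sum_card_comps[OF assms] odd_comps_def)

lemma even_card_odd_comps_add_card:
  assumes "sym A" "finite V" "even (card V)" "S \<subseteq> V"
  shows "even (card (odd_comps A (V - S)) + card S)"
proof -
  have "card (V - S) + card S = card V"
    using assms(2,4) by (metis card_Diff_subset card_mono finite_subset le_add_diff_inverse2)
  moreover have "odd (card (V - S)) \<longleftrightarrow> odd (card (odd_comps A (V - S)))"
    using odd_card_iff_odd_card_odd_comps[OF assms(1)] assms(2) by simp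
  ultimately show ?thesis using assms(3) by presburger
qed

lemma card_odd_comps_Diff_subset_comp:
  assumes "sym A" "finite X" "C \<in> comps A X" "T \<subseteq> C"
  shows "card (odd_comps A (X - T)) = card (odd_comps A (C - T)) + card (odd_comps A (X - C))"
proof -
  have "odd_comps A (X - T) = odd_comps A (C - T) \<union> odd_comps A (X - C)"
    using comps_Diff_subset_comp[OF assms(1,3,4)] by (auto simp: odd_comps_def)
  moreover have "odd_comps A (C - T) \<inter> odd_comps A (X - C) = {}"
    using comps_subset comps_nonempty unfolding odd_comps_def by blast
  moreover have "finite (odd_comps A (C - T))" "finite (odd_comps A (X - C))"
    using assms(2) comps_subset[OF assms(3)] by (auto intro: finite_odd_comps finite_subset)
  ultimately show ?thesis by (simp add: card_Un_disjoint)
qed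

lemma card_odd_comps_Diff_comp:
  assumes "sym A" "finite X" "C \<in> comps A X"
  shows "card (odd_comps A X) = card (odd_comps A (X - C)) + (if odd (card C) then 1 else 0)"
proof -
  have "odd_comps A C = (if odd (card C) then {C} else {})"
    using comps_comp[OF assms(1,3)] by (auto simp: odd_comps_def)
  then show ?thesis
    using card_odd_comps_Diff_subset_comp[OF assms, of "{}"] by simp
qed

section \<open>Hall's theorem\<close>

lemma sdr_glue:
  assumes "K \<subseteq> I" "inj_on f K" "\<forall>i\<in>K. f i \<in> F i"
    and "inj_on g (I - K)" "\<forall>i\<in>I - K. g i \<in> F i \<and> g i \<notin> f ` K"
  shows "\<exists>h. inj_on h I \<and> (\<forall>i\<in>I. h i \<in> F i)"
proof (intro exI conjI)
  let ?h = "\<lambda>i. if i \<in> K then f i else g i"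
  show "inj_on ?h I"
  proof (rule inj_onI)
    fix i j assume ij: "i \<in> I" "j \<in> I" and eq: "?h i = ?h j"
    show "i = j"
    proof (cases "i \<in> K"; cases "j \<in> K")
      assume "i \<in> K" "j \<in> K" then show ?thesis using eq assms(2) by (simp add: inj_on_eq_iff)
    next
      assume "i \<in> K" "j \<notin> K" then show ?thesis using eq ij assms(5) by force
    next
      assume "i \<notin> K" "j \<in> K" then show ?thesis using eq ij assms(5) by force
    next
      assume "i \<notin> K" "j \<notin> K" then show ?thesis using eq ij assms(4) by (simp add: inj_on_eq_iff)
    qed
  qed
  show "\<forall>i\<in>I. ?h i \<in> F i" using assms(3,5) by simp
qed

lemma hall_condition_Diff_critical:
  assumes "finite I" "\<forall>i\<in>I. finite (F i)" "\<forall>K\<subseteq>I. card K \<le> card (\<Union>(F ` K))"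
    and "K \<subseteq> I" "card (\<Union>(F ` K)) = card K"
  shows "\<forall>L\<subseteq>I - K. card L \<le> card (\<Union>i\<in>L. F i - \<Union>(F ` K))"
proof (intro allI impI)
  fix L assume L: "L \<subseteq> I - K"
  define Y where "Y = \<Union>(F ` K)"
  have fin: "finite L" "finite K"
    using assms(1,4) L by (auto intro: rev_finite_subset)
  then have fin': "finite Y" "finite (\<Union>(F ` L))"
    using assms(2,4) L unfolding Y_def by auto
  have "card L + card K = card (L \<union> K)"
    using fin L by (subst card_Un_disjoint) auto
  also have "\<dots> \<le> card (\<Union>(F ` (L \<union> K)))"
    using assms(3) L assms(4) by blast
  also have "\<Union>(F ` (L \<union> K)) = (\<Union>(F ` L) - Y) \<union> Y"
    unfolding Y_def by blast
  also have "card \<dots> = card (\<Union>(F ` L) - Y) + card Y"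
    by (rule card_Un_disjoint) (use fin' in auto)
  also have "\<Union>(F ` L) - Y = (\<Union>i\<in>L. F i - Y)" by blast
  finally show "card L \<le> card (\<Union>i\<in>L. F i - \<Union>(F ` K))"
    using assms(5) unfolding Y_def by simp
qed

lemma hall_condition_Diff_singleton:
  assumes "\<forall>K\<subseteq>I. K \<noteq> {} \<longrightarrow> K \<noteq> I \<longrightarrow> card K < card (\<Union>(F ` K))" "i\<^sub>0 \<in> I"
  shows "\<forall>L\<subseteq>I - {i\<^sub>0}. card L \<le> card (\<Union>i\<in>L. F i - {y})"
proof (intro allI impI)
  fix L assume L: "L \<subseteq> I - {i\<^sub>0}"
  show "card L \<le> card (\<Union>i\<in>L. F i - {y})"
  proof (cases "L = {}")
    case False
    have "L \<subseteq> I" "L \<noteq> I" using L assms(2) by auto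
    then have lt: "card L < card (\<Union>(F ` L))" using assms(1) False by blast
    have "card (\<Union>(F ` L)) - 1 \<le> card (\<Union>(F ` L) - {y})"
      using diff_card_le_card_Diff[of "{y}" "\<Union>(F ` L)"] by simp
    also have "\<Union>(F ` L) - {y} = (\<Union>i\<in>L. F i - {y})" by blast
    finally show ?thesis using lt by linarith
  qed simp
qed

theorem hall_marriage:
  assumes "finite I" "\<forall>i\<in>I. finite (F i)" "\<forall>K\<subseteq>I. card K \<le> card (\<Union>(F ` K))"
  shows "\<exists>f. inj_on f I \<and> (\<forall>i\<in>I. f i \<in> F i)"
  using assms
proof (induction "card I" arbitrary: I F rule: less_induct)
  case less
  show ?case
  proof (cases "\<exists>K\<subseteq>I. K \<noteq> {} \<and> K \<noteq> I \<and> card (\<Union>(F ` K)) \<le> card K")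
    case True
    then obtain K where K: "K \<subseteq> I" "K \<noteq> {}" "K \<noteq> I" "card (\<Union>(F ` K)) \<le> card K"
      by blast
    then have crit: "card (\<Union>(F ` K)) = card K" using less.prems(3) by (simp add: le_antisym)
    have "K \<subset> I" "I - K \<subset> I" using K(1-3) by blast+
    then have "card K < card I" "card (I - K) < card I"
      using less.prems(1) by (simp_all add: psubset_card_mono)
    have "finite K" using K(1) less.prems(1) by (rule finite_subset)
    moreover have "\<forall>i\<in>K. finite (F i)" using K(1) less.prems(2) by blast
    moreover have "\<forall>L\<subseteq>K. card L \<le> card (\<Union>(F ` L))" using K(1) less.prems(3) by auto
    ultimately obtain f1 where f1: "inj_on f1 K" "\<forall>i\<in>K. f1 i \<in> F i"
      using less.hyps[OF \<open>card K < card I\<close>] by blast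
    have "\<forall>i\<in>I - K. finite (F i - \<Union>(F ` K))" using less.prems(2) by blast
    then obtain f2 where f2: "inj_on f2 (I - K)" "\<forall>i\<in>I - K. f2 i \<in> F i - \<Union>(F ` K)"
      using less.hyps[OF \<open>card (I - K) < card I\<close>, of "\<lambda>i. F i - \<Union>(F ` K)"] less.prems(1)
        hall_condition_Diff_critical[OF less.prems K(1) crit] by blast
    show ?thesis
    proof (rule sdr_glue[OF K(1) f1 f2(1)])
      have "f1 ` K \<subseteq> \<Union>(F ` K)" using f1(2) by blast
      then show "\<forall>i\<in>I - K. f2 i \<in> F i \<and> f2 i \<notin> f1 ` K" using f2(2) by blast
    qed
  next
    case False
    show ?thesis
    proof (cases "I = {}")
      case nonempty: False
      then obtain i\<^sub>0 where i\<^sub>0: "i\<^sub>0 \<in> I" by blast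
      have "card {i\<^sub>0} \<le> card (\<Union>(F ` {i\<^sub>0}))"
        using less.prems(3)[rule_format, of "{i\<^sub>0}"] i\<^sub>0 by simp
      then obtain y where y: "y \<in> F i\<^sub>0" by fastforce
      have strict: "\<forall>K\<subseteq>I. K \<noteq> {} \<longrightarrow> K \<noteq> I \<longrightarrow> card K < card (\<Union>(F ` K))"
        using False by (auto simp: not_le)
      have "card (I - {i\<^sub>0}) < card I" using less.prems(1) i\<^sub>0 by (rule card_Diff1_less)
      moreover have "finite (I - {i\<^sub>0})" using less.prems(1) by blast
      moreover have "\<forall>i\<in>I - {i\<^sub>0}. finite (F i - {y})" using less.prems(2) by blast
      moreover have "\<forall>L\<subseteq>I - {i\<^sub>0}. card L \<le> card (\<Union>i\<in>L. F i - {y})"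
        by (rule hall_condition_Diff_singleton[OF strict i\<^sub>0])
      ultimately obtain f2 where f2: "inj_on f2 (I - {i\<^sub>0})" "\<forall>i\<in>I - {i\<^sub>0}. f2 i \<in> F i - {y}"
        using less.hyps[of "I - {i\<^sub>0}" "\<lambda>i. F i - {y}"] by blast
      show ?thesis by (rule sdr_glue[of "{i\<^sub>0}" _ "\<lambda>_. y"]) (use i\<^sub>0 y f2 in auto)
    qed simp
  qed
qed

section \<open>Tutte's theorem\<close>

definition perfect_pairing :: "('v \<times> 'v) set \<Rightarrow> 'v set \<Rightarrow> 'v set set \<Rightarrow> bool" where
  "perfect_pairing A X M \<longleftrightarrow>
     partition_on X M \<and> (\<forall>p\<in>M. \<exists>x y. p = {x, y} \<and> x \<noteq> y \<and> (x, y) \<in> A)"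

definition tutte_condition :: "('v \<times> 'v) set \<Rightarrow> 'v set \<Rightarrow> bool" where
  "tutte_condition A X \<longleftrightarrow> (\<forall>S\<subseteq>X. card (odd_comps A (X - S)) \<le> card S)"

lemma perfect_pairing_insert:
  assumes "perfect_pairing A X M" "x \<notin> X" "y \<notin> X" "x \<noteq> y" "(x, y) \<in> A"
  shows "perfect_pairing A (insert x (insert y X)) (insert {x, y} M)"
proof -
  have "disjnt {x, y} (\<Union>M)"
    using assms(1-3) by (auto simp: perfect_pairing_def partition_on_def disjnt_def)
  moreover have "insert x (insert y X) - {x, y} = X" using assms(2,3) by blast
  ultimately show ?thesis
    using assms(1,4,5) by (auto simp: perfect_pairing_def partition_on_insert)
qed

lemma perfect_pairing_UN:
  assumes "disjoint_family_on X I" "\<And>i. i \<in> I \<Longrightarrow> perfect_pairing A (X i) (M i)"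
  shows "perfect_pairing A (\<Union>i\<in>I. X i) (\<Union>i\<in>I. M i)"
proof -
  have part: "partition_on (X i) (M i)" if "i \<in> I" for i
    using assms(2)[OF that] by (simp add: perfect_pairing_def)
  have "disjoint (\<Union>i\<in>I. M i)"
  proof (rule disjointI)
    fix p q assume "p \<in> (\<Union>i\<in>I. M i)" "q \<in> (\<Union>i\<in>I. M i)" "p \<noteq> q"
    then obtain i j where ij: "i \<in> I" "j \<in> I" "p \<in> M i" "q \<in> M j" by blast
    have "p \<subseteq> X i" "q \<subseteq> X j" using part ij by (auto simp: partition_on_def)
    show "p \<inter> q = {}"
    proof (cases "i = j")
      case True
      then show ?thesis
        using partition_onD2[OF part[OF ij(1)]] ij \<open>p \<noteq> q\<close> by (auto simp: disjoint_def)
    next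
      case False
      then have "X i \<inter> X j = {}" using assms(1) ij(1,2) by (simp add: disjoint_family_on_def)
      then show ?thesis using \<open>p \<subseteq> X i\<close> \<open>q \<subseteq> X j\<close> by blast
    qed
  qed
  moreover have "\<Union>(\<Union>i\<in>I. M i) = (\<Union>i\<in>I. X i)"
    using partition_onD1[OF part] by blast
  moreover have "{} \<notin> (\<Union>i\<in>I. M i)"
    using part by (auto simp: partition_on_def)
  ultimately show ?thesis
    using assms(2) by (auto simp: perfect_pairing_def partition_on_def)
qed

text \<open>
  Anderson's proof of Tutte's theorem: for a largest S attaining equality in Tutte's
  condition, every component of V - S is odd and still satisfies Tutte's condition after
  deleting any one of its vertices, and Hall's theorem matches the components to S.
\<close>

locale maximal_tutte_barrier =
  fixes A :: "('v \<times> 'v) set" and V S :: "'v set"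
  assumes sym: "sym A" and finite: "finite V" and tutte: "tutte_condition A V"
    and subset: "S \<subseteq> V" and tight: "card (odd_comps A (V - S)) = card S"
    and maximal: "\<And>S'. S' \<subseteq> V \<Longrightarrow> card (odd_comps A (V - S')) = card S' \<Longrightarrow> card S' \<le> card S"
begin

lemma larger_not_tight:
  assumes "S' \<subseteq> V" "card S < card S'"
  shows "card (odd_comps A (V - S')) < card S'"
proof -
  have "card (odd_comps A (V - S')) \<le> card S'"
    using tutte assms(1) by (simp add: tutte_condition_def)
  moreover have "card (odd_comps A (V - S')) \<noteq> card S'"
    using maximal[OF assms(1)] assms(2) by fastforce
  ultimately show ?thesis by simp
qed

lemma card_odd_comps_refine:
  assumes C: "C \<in> comps A (V - S)" and T: "T \<subseteq> C"
  shows "card (odd_comps A (V - (S \<union> T))) + (if odd (card C) then 1 else 0)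
    = card (odd_comps A (C - T)) + card S"
proof -
  have "finite (V - S)" using finite by simp
  moreover have "V - S - T = V - (S \<union> T)" by blast
  ultimately show ?thesis
    using card_odd_comps_Diff_subset_comp[OF sym _ C T] card_odd_comps_Diff_comp[OF sym _ C] tight
    by simp
qed

lemma finite_comp: "C \<in> comps A (V - S) \<Longrightarrow> finite C"
  using comps_subset finite by (meson finite_Diff rev_finite_subset)

lemma comps_odd:
  assumes C: "C \<in> comps A (V - S)"
  shows "odd (card C)"
proof (rule ccontr)
  assume even: "\<not> odd (card C)"
  obtain x where x: "x \<in> C" using comps_nonempty[OF C] by blast
  have finC: "finite C" using finite_comp[OF C] .
  have "x \<in> V - S" using comps_subset[OF C] x by (rule subsetD)
  then have S': "S \<union> {x} \<subseteq> V" "card (S \<union> {x}) = card S + 1"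
    using subset finite finite_subset[OF subset] by auto
  have "card C > 0" using x finC by (auto simp: card_gt_0_iff)
  then have "odd (card (C - {x}))" using even x finC by (auto simp: card_Diff_singleton)
  then have "odd (card (odd_comps A (C - {x})))"
    using odd_card_iff_odd_card_odd_comps[OF sym] finC by simp
  then have "card (odd_comps A (C - {x})) \<ge> 1" by (cases "card (odd_comps A (C - {x}))") auto
  then have "card (odd_comps A (V - (S \<union> {x}))) \<ge> card (S \<union> {x})"
    using card_odd_comps_refine[OF C, of "{x}"] x even S'(2) by simp
  then show False using larger_not_tight[OF S'(1)] S'(2) by simp
qed

lemma tutte_condition_comp_Diff:
  assumes C: "C \<in> comps A (V - S)" and x: "x \<in> C"
  shows "tutte_condition A (C - {x})"
  unfolding tutte_condition_def
proof (intro allI impI)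
  fix T assume T: "T \<subseteq> C - {x}"
  have finC: "finite C" using finite_comp[OF C] .
  then have finT: "finite T" using T by (auto intro: rev_finite_subset)
  have xT: "insert x T \<subseteq> C" using T x by blast
  have "x \<notin> T" using T by blast
  then have cardS': "card (S \<union> insert x T) = card S + card T + 1"
    using T x comps_subset[OF C] finT finite_subset[OF subset finite] by (subst card_Un_disjoint) auto
  have S'V: "S \<union> insert x T \<subseteq> V" using subset comps_subset[OF C] xT by blast
  have card_eq: "card (C - {x} - T) + card T + 1 = card C"
  proof -
    have "card (C - insert x T) = card C - card (insert x T)" "card (insert x T) \<le> card C"
      using card_Diff_subset[OF _ xT] card_mono[OF finC xT] finT by simp_all
    moreover have "card (insert x T) = card T + 1" using \<open>x \<notin> T\<close> finT by simp
    moreover have "C - {x} - T = C - insert x T" by blast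
    ultimately show ?thesis by simp
  qed
  have "odd (card (C - {x} - T)) \<longleftrightarrow> odd (card (odd_comps A (C - {x} - T)))"
    using odd_card_iff_odd_card_odd_comps[OF sym, of "C - {x} - T"] finC by simp
  then have parity: "even (card (odd_comps A (C - {x} - T)) + card T)"
    using card_eq comps_odd[OF C] by presburger
  show "card (odd_comps A (C - {x} - T)) \<le> card T"
  proof (rule ccontr)
    assume "\<not> ?thesis"
    then have "card (odd_comps A (C - {x} - T)) \<ge> card T + 2" using parity by presburger
    moreover have "C - insert x T = C - {x} - T" by blast
    then have "card (odd_comps A (V - (S \<union> insert x T))) + 1
        = card (odd_comps A (C - {x} - T)) + card S"
      using card_odd_comps_refine[OF C xT] comps_odd[OF C] by simp
    ultimately have "card (odd_comps A (V - (S \<union> insert x T))) \<ge> card (S \<union> insert x T)"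
      using cardS' by linarith
    then show False using larger_not_tight[OF S'V] cardS' by simp
  qed
qed

definition neighbours :: "'v set \<Rightarrow> 'v set" where
  "neighbours C = {s \<in> S. \<exists>y\<in>C. (y, s) \<in> A}"

lemma hall_condition_neighbours:
  assumes "K \<subseteq> comps A (V - S)"
  shows "card K \<le> card (\<Union>(neighbours ` K))"
proof -
  define T where "T = \<Union>(neighbours ` K)"
  have TS: "T \<subseteq> S" by (auto simp: T_def neighbours_def)
  have "K \<subseteq> odd_comps A (V - T)"
  proof
    fix C assume CK: "C \<in> K"
    then have C: "C \<in> comps A (V - S)" using assms by blast
    have "C \<in> comps A (V - T)"
    proof (rule comps_of_closed[OF C])
      show "C \<subseteq> V - T" using comps_subset[OF C] TS by blast
      fix y z assume yz: "y \<in> C" "z \<in> V - T" "(y, z) \<in> A"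
      then have "z \<notin> S" using CK by (auto simp: T_def neighbours_def)
      then show "z \<in> C" using comps_closed[OF C yz(1) _ yz(3)] yz(2) by blast
    qed
    then show "C \<in> odd_comps A (V - T)" using comps_odd[OF C] by (simp add: odd_comps_def)
  qed
  then have "card K \<le> card (odd_comps A (V - T))"
    using finite by (simp add: card_mono finite_odd_comps)
  also have "\<dots> \<le> card T"
    using tutte TS subset by (auto simp: tutte_condition_def)
  finally show ?thesis unfolding T_def .
qed

lemma neighbours_matching:
  obtains f where "inj_on f (comps A (V - S))" "\<forall>C\<in>comps A (V - S). f C \<in> neighbours C"
    "f ` comps A (V - S) = S"
proof -
  let ?I = "comps A (V - S)"
  have "finite ?I" using finite by (simp add: finite_comps)
  moreover have "\<forall>C\<in>?I. finite (neighbours C)"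
    using finite_subset[OF subset finite] by (simp add: neighbours_def)
  ultimately obtain f where f: "inj_on f ?I" "\<forall>C\<in>?I. f C \<in> neighbours C"
    using hall_marriage[of ?I neighbours] hall_condition_neighbours by blast
  have "odd_comps A (V - S) = ?I" using comps_odd by (auto simp: odd_comps_def)
  then have "card (f ` ?I) = card S" using card_image[OF f(1)] tight by simp
  moreover have "f ` ?I \<subseteq> S" using f(2) by (auto simp: neighbours_def)
  ultimately have "f ` ?I = S" using finite_subset[OF subset finite] by (simp add: card_subset_eq)
  then show ?thesis using that f by blast
qed

lemma perfect_pairing_exists:
  assumes IH: "\<And>C x. C \<in> comps A (V - S) \<Longrightarrow> x \<in> C \<Longrightarrow> \<exists>M. perfect_pairing A (C - {x}) M"
  shows "\<exists>M. perfect_pairing A V M"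
proof -
  let ?I = "comps A (V - S)"
  obtain f where f: "inj_on f ?I" "\<forall>C\<in>?I. f C \<in> neighbours C" and fI: "f ` ?I = S"
    by (rule neighbours_matching)
  obtain x where x: "\<forall>C\<in>?I. x C \<in> C \<and> (x C, f C) \<in> A"
    using f(2) bchoice[of ?I "\<lambda>C y. y \<in> C \<and> (y, f C) \<in> A"] by (auto simp: neighbours_def)
  obtain M where M: "\<forall>C\<in>?I. perfect_pairing A (C - {x C}) (M C)"
    using IH x bchoice[of ?I "\<lambda>C M. perfect_pairing A (C - {x C}) M"] by blast
  have fC: "f C \<notin> C'" if "C \<in> ?I" "C' \<in> ?I" for C C'
    using fI that comps_subset[OF that(2)] by blast
  have "perfect_pairing A (insert (f C) C) (insert {x C, f C} (M C))" if C: "C \<in> ?I" for C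
  proof -
    have xC: "x C \<in> C" "(x C, f C) \<in> A" using x C by auto
    then have "x C \<noteq> f C" using fC[OF C C] by auto
    then have "perfect_pairing A (insert (x C) (insert (f C) (C - {x C}))) (insert {x C, f C} (M C))"
      using perfect_pairing_insert[of A "C - {x C}" "M C" "x C" "f C"] M xC(2) fC[OF C C] C by auto
    moreover have "insert (x C) (insert (f C) (C - {x C})) = insert (f C) C" using xC(1) by blast
    ultimately show ?thesis by simp
  qed
  moreover have "disjoint_family_on (\<lambda>C. insert (f C) C) ?I"
    unfolding disjoint_family_on_def
  proof (intro ballI impI)
    fix C C' assume C: "C \<in> ?I" "C' \<in> ?I" "C \<noteq> C'"
    then have "C \<inter> C' = {}" "f C \<noteq> f C'"
      using comps_disjoint[OF sym] inj_onD[OF f(1)] by blast+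
    then show "insert (f C) C \<inter> insert (f C') C' = {}" using fC C by blast
  qed
  ultimately have "perfect_pairing A (\<Union>C\<in>?I. insert (f C) C) (\<Union>C\<in>?I. insert {x C, f C} (M C))"
    by (intro perfect_pairing_UN)
  moreover have "(\<Union>C\<in>?I. insert (f C) C) = f ` ?I \<union> \<Union>?I" by blast
  then have "(\<Union>C\<in>?I. insert (f C) C) = V"
    using fI Union_comps[of A "V - S"] subset by auto
  ultimately show ?thesis by auto
qed

end

theorem tutte:
  assumes "sym A" "finite V" "tutte_condition A V"
  shows "\<exists>M. perfect_pairing A V M"
  using assms(2,3)
proof (induction "card V" arbitrary: V rule: less_induct)
  case less
  define P where "P S \<longleftrightarrow> S \<subseteq> V \<and> card (odd_comps A (V - S)) = card S" for S
  have "P {}" using less.prems(2) by (auto simp: P_def tutte_condition_def)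
  moreover have "\<forall>S. P S \<longrightarrow> card S < Suc (card V)"
    using card_mono[OF less.prems(1)] by (auto simp: P_def less_Suc_eq_le)
  ultimately obtain S where S: "P S" "\<And>S'. P S' \<Longrightarrow> card S' \<le> card S"
    using Lattices_Big.ex_has_greatest_nat[of P "{}" card "Suc (card V)"] by blast
  then interpret maximal_tutte_barrier A V S
    using assms(1) less.prems by unfold_locales (auto simp: P_def)
  show ?case
  proof (rule perfect_pairing_exists)
    fix C x assume C: "C \<in> comps A (V - S)" and x: "x \<in> C"
    have "C - {x} \<subset> V" using comps_subset[OF C] x by blast
    then have "card (C - {x}) < card V" using less.prems(1) by (simp add: psubset_card_mono)
    then show "\<exists>M. perfect_pairing A (C - {x}) M"
      using less.hyps finite_comp[OF C] tutte_condition_comp_Diff[OF C x] by blast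
  qed
qed

section \<open>Cuts in multigraphs\<close>

definition adjacency :: "'e set \<Rightarrow> ('e \<Rightarrow> 'v set) \<Rightarrow> ('v \<times> 'v) set" where
  "adjacency E ends = {(u, w). \<exists>e\<in>E. ends e = {u, w}}"

definition cut_edges :: "('e \<Rightarrow> 'v set) \<Rightarrow> 'e set \<Rightarrow> 'v set \<Rightarrow> 'e set" where
  "cut_edges ends F X = {e \<in> F. card (ends e \<inter> X) = 1}"

lemma sym_adjacency: "sym (adjacency E ends)"
  unfolding adjacency_def sym_def by (auto simp: insert_commute)

lemma components_eq_comps: "components E ends X = comps (adjacency E ends) X"
proof -
  have "adj_rel E ends X = adjacency E ends \<inter> X \<times> X"
    unfolding adj_rel_def adjacency_def by blast
  then show ?thesis
    unfolding components_def comps_def comp_of_def by (auto simp: Setcompr_eq_image)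
qed

lemma odd_components_eq_odd_comps:
  "odd_components V E ends S = odd_comps (adjacency E ends) (V - S)"
  unfolding odd_components_def odd_comps_def components_eq_comps ..

lemma odd_components_subset: "J \<in> odd_components V E ends B \<Longrightarrow> J \<subseteq> V - B"
  using comps_subset by (auto simp: odd_components_eq_odd_comps odd_comps_def)

lemma multigraph_edgeE:
  assumes "multigraph V E ends" "e \<in> E"
  obtains p q where "ends e = {p, q}" "p \<noteq> q" "p \<in> V" "q \<in> V"
proof -
  have "card (ends e) = 2" "ends e \<subseteq> V" using assms by (auto simp: multigraph_def)
  then show ?thesis using that by (auto simp: card_2_iff)
qed

lemma card_ends_Int_eq_1:
  assumes "multigraph V E ends" "e \<in> E"
  shows "card (ends e \<inter> J) = 1 \<longleftrightarrow> ends e \<inter> J \<noteq> {} \<and> \<not> ends e \<subseteq> J"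
proof -
  obtain p q where "ends e = {p, q}" "p \<noteq> q" "p \<in> V" "q \<in> V"
    by (rule multigraph_edgeE[OF assms])
  then show ?thesis by (cases "p \<in> J"; cases "q \<in> J") auto
qed

lemma sum_degree_in:
  assumes "finite F" "finite X"
  shows "(\<Sum>x\<in>X. degree_in F ends x) = (\<Sum>e\<in>F. card (ends e \<inter> X))"
proof -
  have "(\<Sum>x\<in>X. degree_in F ends x) = (\<Sum>x\<in>X. \<Sum>e\<in>F. if x \<in> ends e then 1 else 0)"
    unfolding degree_in_def using assms(1) by (simp add: sum.If_cases Int_def)
  also have "\<dots> = (\<Sum>e\<in>F. \<Sum>x\<in>X. if x \<in> ends e then 1 else 0)"
    by (rule sum.swap)
  also have "\<dots> = (\<Sum>e\<in>F. card (ends e \<inter> X))"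
    using assms(2) by (simp add: sum.If_cases Int_def conj_commute)
  finally show ?thesis .
qed

lemma sum_degree_in_eq_cut_edges:
  assumes "multigraph V E ends" "F \<subseteq> E" "finite S"
  shows "(\<Sum>s\<in>S. degree_in F ends s) = card (cut_edges ends F S) + 2 * card {e \<in> F. ends e \<subseteq> S}"
proof -
  have finF: "finite F" using assms(1,2) by (auto simp: multigraph_def intro: finite_subset)
  have edge: "card (ends e \<inter> S)
      = (if card (ends e \<inter> S) = 1 then 1 else 0) + 2 * (if ends e \<subseteq> S then 1 else 0)"
    if e: "e \<in> F" for e
  proof -
    have "e \<in> E" using e assms(2) by blast
    then obtain p q where "ends e = {p, q}" "p \<noteq> q" "p \<in> V" "q \<in> V"
      by (rule multigraph_edgeE[OF assms(1)])
    then show ?thesis by (cases "p \<in> S"; cases "q \<in> S") auto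
  qed
  have "(\<Sum>s\<in>S. degree_in F ends s) = (\<Sum>e\<in>F. card (ends e \<inter> S))"
    using sum_degree_in[OF finF assms(3)] .
  also have "\<dots> = (\<Sum>e\<in>F. (if card (ends e \<inter> S) = 1 then 1 else 0)
      + 2 * (if ends e \<subseteq> S then 1 else 0))"
    using edge by (rule sum.cong[OF refl])
  also have "\<dots> = card (cut_edges ends F S) + 2 * card {e \<in> F. ends e \<subseteq> S}"
    using finF by (simp add: sum.distrib sum_distrib_left[symmetric] sum.If_cases cut_edges_def Int_def)
  finally show ?thesis .
qed

lemma cut_edge_componentE:
  assumes "multigraph V E ends" "K \<in> comps (adjacency E ends) (V - S)"
    and "e \<in> E" "card (ends e \<inter> K) = 1"
  obtains x s where "ends e = {x, s}" "x \<in> K" "s \<in> S"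
proof -
  obtain p q where pq: "ends e = {p, q}" "p \<noteq> q" "p \<in> V" "q \<in> V"
    by (rule multigraph_edgeE[OF assms(1,3)])
  have closed: "y \<in> S" if "y \<in> V" "x \<in> K" "y \<notin> K" "ends e = {x, y}" for x y
  proof (rule ccontr)
    assume "y \<notin> S"
    moreover have "(x, y) \<in> adjacency E ends" using assms(3) that(4) by (auto simp: adjacency_def)
    ultimately show False using comps_closed[OF assms(2) that(2)] that(1,3) by blast
  qed
  consider "p \<in> K" "q \<notin> K" | "q \<in> K" "p \<notin> K"
    using assms(4) pq(1,2) by (cases "p \<in> K"; cases "q \<in> K") auto
  then show ?thesis
  proof cases
    case 1 then show ?thesis using that closed pq by blast
  next
    case 2 then show ?thesis using that[of q p] closed[of p q] pq by (simp add: insert_commute)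
  qed
qed

lemma cut_edges_comp_subset:
  assumes "multigraph V E ends" "F \<subseteq> E" "K \<in> comps (adjacency E ends) (V - S)"
  shows "cut_edges ends F K \<subseteq> cut_edges ends F S"
proof
  fix e assume e: "e \<in> cut_edges ends F K"
  then have "e \<in> E" "card (ends e \<inter> K) = 1" using assms(2) by (auto simp: cut_edges_def)
  then obtain x s where xs: "ends e = {x, s}" "x \<in> K" "s \<in> S"
    by (rule cut_edge_componentE[OF assms(1,3)])
  have "x \<notin> S" using xs(2) comps_subset[OF assms(3)] by blast
  then have "ends e \<inter> S = {s}" using xs by auto
  then show "e \<in> cut_edges ends F S" using e by (simp add: cut_edges_def)
qed

lemma cut_edges_comps_disjoint:
  assumes "multigraph V E ends" "F \<subseteq> E"
    and K: "K \<in> comps (adjacency E ends) (V - S)" and K': "K' \<in> comps (adjacency E ends) (V - S)"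
    and "K \<noteq> K'"
  shows "cut_edges ends F K \<inter> cut_edges ends F K' = {}"
proof (rule ccontr)
  assume "cut_edges ends F K \<inter> cut_edges ends F K' \<noteq> {}"
  then obtain e where e: "e \<in> E" "card (ends e \<inter> K) = 1" "card (ends e \<inter> K') = 1"
    using assms(2) by (auto simp: cut_edges_def)
  obtain x s where xs: "ends e = {x, s}" "x \<in> K" "s \<in> S"
    by (rule cut_edge_componentE[OF assms(1) K e(1,2)])
  obtain y where y: "y \<in> ends e" "y \<in> K'"
    using e(3) by (metis card_0_eq disjoint_iff finite.emptyI zero_neq_one)
  have "y \<notin> S" using y(2) comps_subset[OF K'] by blast
  then have "y = x" using xs y(1) by auto
  then have "K \<inter> K' \<noteq> {}" using xs(2) y(2) by blast
  then show False using comps_disjoint[OF sym_adjacency K K'] assms(5) by blast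
qed

lemma sum_card_cut_edges_comps_le:
  assumes "multigraph V E ends" "F \<subseteq> E" "\<K> \<subseteq> comps (adjacency E ends) (V - S)"
  shows "(\<Sum>K\<in>\<K>. card (cut_edges ends F K)) \<le> card (cut_edges ends F S)"
proof -
  have finV: "finite V" and finF: "finite F"
    using assms(1,2) by (auto simp: multigraph_def intro: finite_subset)
  have "finite \<K>" using assms(3) finite_comps[of "V - S"] finV by (auto intro: finite_subset)
  then have "(\<Sum>K\<in>\<K>. card (cut_edges ends F K)) = card (\<Union>K\<in>\<K>. cut_edges ends F K)"
    using finF cut_edges_comps_disjoint[OF assms(1,2)] assms(3)
    by (intro card_UN_disjoint[symmetric]) (auto simp: cut_edges_def)
  also have "\<dots> \<le> card (cut_edges ends F S)"
    using cut_edges_comp_subset[OF assms(1,2)] assms(3) finF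
    by (intro card_mono) (auto simp: cut_edges_def)
  finally show ?thesis .
qed

lemma odd_card_cut_edges:
  assumes "multigraph V E ends" "F \<subseteq> E" "finite K" "odd (card K)"
    and "\<forall>w\<in>K. odd (degree_in F ends w)"
  shows "odd (card (cut_edges ends F K))"
proof -
  have "{w \<in> K. odd (degree_in F ends w)} = K" using assms(5) by blast
  then have "odd (\<Sum>w\<in>K. degree_in F ends w)"
    using even_sum_iff[OF assms(3), of "degree_in F ends"] assms(4) by simp
  then show ?thesis using sum_degree_in_eq_cut_edges[OF assms(1-3)] by simp
qed

lemma card_cut_edges_barrier:
  assumes "multigraph V E ends" "barrier V E ends B" "F \<subseteq> E"
    and "\<forall>w\<in>V - B. odd (degree_in F ends w)" "\<forall>b\<in>B. degree_in F ends b \<le> 1"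
    and K: "K \<in> odd_components V E ends B"
  shows "card (cut_edges ends F K) = 1"
proof -
  define \<K> where "\<K> = odd_comps (adjacency E ends) (V - B)"
  have finV: "finite V" using assms(1) by (simp add: multigraph_def)
  have B: "B \<subseteq> V" "card \<K> = card B"
    using assms(2) by (auto simp: barrier_def \<K>_def odd_components_eq_odd_comps)
  have \<K>: "\<K> \<subseteq> comps (adjacency E ends) (V - B)" "finite \<K>"
    using finV by (auto simp: \<K>_def odd_comps_def finite_comps)
  have odd_cut: "odd (card (cut_edges ends F K'))" if "K' \<in> \<K>" for K'
  proof (rule odd_card_cut_edges[OF assms(1,3)])
    have "K' \<subseteq> V - B" using that comps_subset by (auto simp: \<K>_def odd_comps_def)
    then show "finite K'" "\<forall>w\<in>K'. odd (degree_in F ends w)"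
      using finV assms(4) by (auto intro: finite_subset)
    show "odd (card K')" using that by (simp add: \<K>_def odd_comps_def)
  qed
  have "(\<Sum>K'\<in>\<K>. card (cut_edges ends F K')) \<le> card (cut_edges ends F B)"
    by (rule sum_card_cut_edges_comps_le[OF assms(1,3) \<K>(1)])
  also have "\<dots> \<le> (\<Sum>b\<in>B. degree_in F ends b)"
    using sum_degree_in_eq_cut_edges[OF assms(1,3) finite_subset[OF B(1) finV]] by simp
  also have "\<dots> \<le> card \<K>"
    using sum_mono[of B "degree_in F ends" "\<lambda>_. 1"] assms(5) B(2) by simp
  finally have le: "(\<Sum>K'\<in>\<K>. card (cut_edges ends F K')) \<le> (\<Sum>K'\<in>\<K>. 1)" by simp
  have "K \<in> \<K>" using K by (simp add: \<K>_def odd_components_eq_odd_comps)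
  show ?thesis
  proof (rule ccontr)
    assume "card (cut_edges ends F K) \<noteq> 1"
    then have "1 < card (cut_edges ends F K)" using odd_pos[OF odd_cut[OF \<open>K \<in> \<K>\<close>]] by linarith
    then have "(\<Sum>K'\<in>\<K>. 1) < (\<Sum>K'\<in>\<K>. card (cut_edges ends F K'))"
      using odd_cut \<open>K \<in> \<K>\<close> \<K>(2)
      by (intro sum_strict_mono_ex1) (auto simp: Suc_le_eq odd_pos)
    then show False using le by simp
  qed
qed

section \<open>Perfect matchings of cubic 3-connected graphs\<close>

lemma degree_in_insert:
  assumes "finite F" "e \<notin> F"
  shows "degree_in (insert e F) ends x = degree_in F ends x + (if x \<in> ends e then 1 else 0)"
proof (cases "x \<in> ends e")
  case True
  then have "{e' \<in> insert e F. x \<in> ends e'} = insert e {e' \<in> F. x \<in> ends e'}" by auto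
  then show ?thesis using assms True by (simp add: degree_in_def)
next
  case False
  then have "{e' \<in> insert e F. x \<in> ends e'} = {e' \<in> F. x \<in> ends e'}" by auto
  then show ?thesis using False by (simp add: degree_in_def)
qed

lemma cubic_even_card:
  assumes "cubic V E ends"
  shows "even (card V)"
proof -
  have mg: "multigraph V E ends" and finV: "finite V"
    using assms by (auto simp: cubic_def multigraph_def)
  have "cut_edges ends E V = {}"
    using mg by (auto simp: cut_edges_def multigraph_def Int_absorb2)
  then have "(\<Sum>v\<in>V. degree_in E ends v) = 2 * card {e \<in> E. ends e \<subseteq> V}"
    using sum_degree_in_eq_cut_edges[OF mg subset_refl finV] by simp
  moreover have "(\<Sum>v\<in>V. degree_in E ends v) = 3 * card V"
    using assms by (simp add: cubic_def)
  ultimately show ?thesis by presburger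
qed

lemma card_cut_edges_ne_1:
  assumes mg: "multigraph V E ends" and conn: "three_connected V E ends"
    and S: "S \<subseteq> V" "s\<^sub>1 \<in> S" "s\<^sub>2 \<in> S" "s\<^sub>1 \<noteq> s\<^sub>2"
    and K: "K \<in> comps (adjacency E ends) (V - S)"
  shows "card (cut_edges ends E K) \<noteq> 1"
proof
  assume "card (cut_edges ends E K) = 1"
  then obtain e where e: "cut_edges ends E K = {e}" by (rule card_1_singletonE)
  then have "e \<in> E" "card (ends e \<inter> K) = 1" by (auto simp: cut_edges_def)
  then obtain x s where xs: "ends e = {x, s}" "x \<in> K" "s \<in> S"
    by (rule cut_edge_componentE[OF mg K])
  obtain t where t: "t \<in> S" "t \<noteq> s" using S(2-4) by blast
  have KV: "K \<subseteq> V - S" using comps_subset[OF K] .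
  let ?A = "adjacency E ends"
  have "comp_of ?A (V - {s}) x \<subseteq> K"
  proof (rule comp_of_closed[OF xs(2)])
    fix y z assume yz: "y \<in> K" "z \<in> V - {s}" "(y, z) \<in> ?A"
    then obtain e' where e': "e' \<in> E" "ends e' = {y, z}" by (auto simp: adjacency_def)
    show "z \<in> K"
    proof (rule ccontr)
      assume "z \<notin> K"
      then have "ends e' \<inter> K = {y}" using e'(2) yz(1) by blast
      then have "e' = e" using e e'(1) by (auto simp: cut_edges_def)
      then show False using e'(2) xs(1,2) yz(1,2) \<open>z \<notin> K\<close> by (auto simp: doubleton_eq_iff)
    qed
  qed
  moreover have "comp_of ?A (V - {s}) t = comp_of ?A (V - {s}) x"
  proof -
    have "card (comps ?A (V - {s})) = 1"
      using conn S xs(3) by (auto simp: three_connected_def connected_graph_def components_eq_comps)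
    moreover have "x \<in> V - {s}" "t \<in> V - {s}" using xs(2,3) KV t S(1) by auto
    ultimately show ?thesis using comp_of_in_comps by (metis card_1_singletonE singletonD)
  qed
  ultimately have "t \<in> K" using comp_of_self[of t ?A "V - {s}"] by blast
  then show False using KV t(1) by blast
qed

lemma card_cut_edges_ge_3:
  assumes cub: "cubic V E ends" and conn: "three_connected V E ends"
    and S: "S \<subseteq> V" "s\<^sub>1 \<in> S" "s\<^sub>2 \<in> S" "s\<^sub>1 \<noteq> s\<^sub>2"
    and K: "K \<in> comps (adjacency E ends) (V - S)" "odd (card K)"
  shows "3 \<le> card (cut_edges ends E K)"
proof -
  have mg: "multigraph V E ends" using cub by (simp add: cubic_def)
  have KV: "K \<subseteq> V - S" using comps_subset[OF K(1)] .
  have "finite K" using KV mg by (auto simp: multigraph_def intro: rev_finite_subset)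
  moreover have "\<forall>w\<in>K. odd (degree_in E ends w)" using KV cub by (auto simp: cubic_def)
  ultimately have "odd (card (cut_edges ends E K))"
    by (rule odd_card_cut_edges[OF mg subset_refl _ K(2)])
  moreover have "card (cut_edges ends E K) \<noteq> 1"
    by (rule card_cut_edges_ne_1[OF mg conn S K(1)])
  moreover have "\<And>n::nat. odd n \<Longrightarrow> n \<noteq> 1 \<Longrightarrow> 3 \<le> n" by presburger
  ultimately show ?thesis by blast
qed

lemma card_cut_edges_cubic_le:
  assumes "cubic V E ends" "S \<subseteq> V" "e\<^sub>0 \<in> E" "ends e\<^sub>0 \<subseteq> S"
  shows "card (cut_edges ends E S) + 2 \<le> 3 * card S"
proof -
  have mg: "multigraph V E ends" and fin: "finite V" "finite E"
    using assms(1) by (auto simp: cubic_def multigraph_def)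
  have "{e \<in> E. ends e \<subseteq> S} \<noteq> {}" using assms(3,4) by blast
  then have "card {e \<in> E. ends e \<subseteq> S} \<ge> 1" using fin(2) by (simp add: Suc_le_eq card_gt_0_iff)
  moreover have "(\<Sum>s\<in>S. degree_in E ends s) = (\<Sum>s\<in>S. 3)"
    using assms(1,2) by (intro sum.cong) (auto simp: cubic_def)
  ultimately show ?thesis
    using sum_degree_in_eq_cut_edges[OF mg subset_refl finite_subset[OF assms(2) fin(1)]] by simp
qed

text \<open>
  Petersen's argument: if S violates Tutte's condition in V - {a, b}, then V - (S \<union> {a, b})
  has at least |S \<union> {a, b}| odd components by parity, each joined to S \<union> {a, b} by at least
  three edges, whereas the edge ab leaves room for at most 3|S \<union> {a, b}| - 2 of them.
\<close>

lemma tutte_condition_cubic_Diff_edge: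
  assumes cub: "cubic V E ends" and conn: "three_connected V E ends"
    and e\<^sub>0: "e\<^sub>0 \<in> E" "ends e\<^sub>0 = {a, b}"
  shows "tutte_condition (adjacency E ends) (V - {a, b})"
  unfolding tutte_condition_def
proof (intro allI impI)
  fix S assume S: "S \<subseteq> V - {a, b}"
  let ?A = "adjacency E ends"
  define S' where "S' = S \<union> {a, b}"
  define \<K> where "\<K> = odd_comps ?A (V - S')"
  have mg: "multigraph V E ends" and finV: "finite V"
    using cub by (auto simp: cubic_def multigraph_def)
  have ab: "a \<noteq> b" "a \<in> V" "b \<in> V"
    using multigraph_edgeE[OF mg e\<^sub>0(1)] e\<^sub>0(2) by (metis doubleton_eq_iff insertI1)+
  have S'V: "S' \<subseteq> V" using S ab by (auto simp: S'_def)
  have cardS': "card S' = card S + 2"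
    using S ab(1) finite_subset[OF S] finV by (auto simp: S'_def card_insert_if)
  have "V - {a, b} - S = V - S'" by (auto simp: S'_def)
  moreover have "card (odd_comps ?A (V - S')) \<le> card S"
  proof (rule ccontr)
    assume "\<not> card (odd_comps ?A (V - S')) \<le> card S"
    moreover have "even (card \<K> + card S')"
      unfolding \<K>_def by (rule even_card_odd_comps_add_card[OF sym_adjacency finV cubic_even_card[OF cub] S'V])
    moreover have "\<And>k s' s :: nat. \<not> k \<le> s \<Longrightarrow> even (k + s') \<Longrightarrow> s' = s + 2 \<Longrightarrow> s' \<le> k"
      by presburger
    ultimately have "card S' \<le> card \<K>" using cardS' unfolding \<K>_def by blast
    have "3 * card S' \<le> (\<Sum>K\<in>\<K>. 3)" using \<open>card S' \<le> card \<K>\<close> by simp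
    also have "\<dots> \<le> (\<Sum>K\<in>\<K>. card (cut_edges ends E K))"
    proof (rule sum_mono)
      fix K assume "K \<in> \<K>"
      then show "3 \<le> card (cut_edges ends E K)"
        using card_cut_edges_ge_3[OF cub conn S'V, of a b] ab(1)
        by (auto simp: \<K>_def odd_comps_def S'_def)
    qed
    also have "\<dots> \<le> card (cut_edges ends E S')"
      by (rule sum_card_cut_edges_comps_le[OF mg subset_refl]) (auto simp: \<K>_def odd_comps_def)
    also have "\<dots> + 2 \<le> 3 * card S'"
      by (rule card_cut_edges_cubic_le[OF cub S'V e\<^sub>0(1)]) (simp add: e\<^sub>0(2) S'_def)
    finally show False by simp
  qed
  ultimately show "card (odd_comps ?A (V - {a, b} - S)) \<le> card S" by simp
qed

lemma perfect_matching_of_pairing: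
  assumes "perfect_pairing (adjacency E ends) X P"
  shows "\<exists>F\<subseteq>E. (\<forall>x\<in>X. degree_in F ends x = 1) \<and> (\<forall>e\<in>F. ends e \<in> P)"
proof -
  have "\<forall>p\<in>P. \<exists>e\<in>E. ends e = p"
    using assms by (auto simp: perfect_pairing_def adjacency_def)
  then obtain edge where edge: "\<forall>p\<in>P. edge p \<in> E \<and> ends (edge p) = p"
    by metis
  have part: "partition_on X P" using assms by (simp add: perfect_pairing_def)
  have "degree_in (edge ` P) ends x = 1" if x: "x \<in> X" for x
  proof -
    obtain p where p: "p \<in> P" "x \<in> p" using partition_onD1[OF part] x by blast
    have unique: "q = p" if "q \<in> P" "x \<in> q" for q
      using partition_onD2[OF part] p that by (auto simp: disjoint_def)
    have "{e \<in> edge ` P. x \<in> ends e} = {edge p}"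
    proof (intro equalityI subsetI)
      fix e assume "e \<in> {e \<in> edge ` P. x \<in> ends e}"
      then obtain q where q: "q \<in> P" "e = edge q" "x \<in> ends e" by blast
      then have "q = p" using unique edge by simp
      then show "e \<in> {edge p}" using q(2) by simp
    qed (use edge p in auto)
    then show ?thesis by (simp add: degree_in_def)
  qed
  moreover have "edge ` P \<subseteq> E" "\<forall>e\<in>edge ` P. ends e \<in> P" using edge by auto
  ultimately show ?thesis by blast
qed

lemma edge_in_perfect_matching:
  assumes cub: "cubic V E ends" and conn: "three_connected V E ends" and e\<^sub>0: "e\<^sub>0 \<in> E"
  shows "\<exists>M. perfect_matching V E ends M \<and> e\<^sub>0 \<in> M"
proof -
  have mg: "multigraph V E ends" and fin: "finite V" "finite E"
    using cub by (auto simp: cubic_def multigraph_def)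
  obtain a b where ab: "ends e\<^sub>0 = {a, b}" "a \<noteq> b" "a \<in> V" "b \<in> V"
    by (rule multigraph_edgeE[OF mg e\<^sub>0])
  obtain P where P: "perfect_pairing (adjacency E ends) (V - {a, b}) P"
    using tutte[OF sym_adjacency] tutte_condition_cubic_Diff_edge[OF cub conn e\<^sub>0 ab(1)] fin(1)
    by blast
  obtain F where F: "F \<subseteq> E" "\<forall>x\<in>V - {a, b}. degree_in F ends x = 1" "\<forall>e\<in>F. ends e \<in> P"
    using perfect_matching_of_pairing[OF P] by blast
  have "V - {a, b} = \<Union>P" using P partition_onD1 by (auto simp: perfect_pairing_def)
  then have inside: "ends e \<subseteq> V - {a, b}" if "e \<in> F" for e
    using F(3) that by blast
  have "e\<^sub>0 \<notin> F" using inside ab(1) by blast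
  have finF: "finite F" using F(1) fin(2) by (rule finite_subset)
  have "degree_in (insert e\<^sub>0 F) ends x = 1" if "x \<in> V" for x
  proof -
    have deg: "degree_in (insert e\<^sub>0 F) ends x = degree_in F ends x + (if x \<in> ends e\<^sub>0 then 1 else 0)"
      by (rule degree_in_insert[OF finF \<open>e\<^sub>0 \<notin> F\<close>])
    show ?thesis
    proof (cases "x \<in> {a, b}")
      case True
      then have "{e \<in> F. x \<in> ends e} = {}" using inside by blast
      then have "degree_in F ends x = 0" unfolding degree_in_def by (metis card.empty)
      then show ?thesis using deg True ab(1) by simp
    next
      case False
      then show ?thesis using deg F(2) that ab(1) by simp
    qed
  qed
  moreover have "insert e\<^sub>0 F \<subseteq> E" using F(1) e\<^sub>0 by blast
  ultimately show ?thesis unfolding perfect_matching_def by blast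
qed

section \<open>Fragments\<close>

lemma Some_in_frag_ends: "x \<in> J \<Longrightarrow> Some x \<in> frag_ends ends J e \<longleftrightarrow> x \<in> ends e"
  by (force simp: frag_ends_def)

lemma None_in_frag_ends: "None \<in> frag_ends ends J e \<longleftrightarrow> \<not> ends e \<subseteq> J"
  by (force simp: frag_ends_def)

lemma degree_frag_Some:
  "x \<in> J \<Longrightarrow> degree_in F (frag_ends ends J) (Some x) = degree_in F ends x"
  by (simp add: degree_in_def Some_in_frag_ends)

lemma degree_frag_None:
  assumes "multigraph V E ends" "F \<subseteq> E" "\<forall>e\<in>F. ends e \<inter> J \<noteq> {}"
  shows "degree_in F (frag_ends ends J) None = card (cut_edges ends F J)"
proof -
  have "None \<in> frag_ends ends J e \<longleftrightarrow> card (ends e \<inter> J) = 1" if "e \<in> F" for e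
    using that assms(2,3) card_ends_Int_eq_1[OF assms(1), of e J] by (auto simp: None_in_frag_ends)
  then have "{e \<in> F. None \<in> frag_ends ends J e} = cut_edges ends F J"
    by (auto simp: cut_edges_def)
  then show ?thesis by (simp add: degree_in_def)
qed

lemma v_matching_fragment:
  assumes mg: "multigraph V E ends" and bar: "barrier V E ends B"
    and J: "J \<in> odd_components V E ends B" and v: "v \<in> J"
    and F: "v_matching V E ends v F"
  shows "v_matching (frag_V J) (frag_E E ends J) (frag_ends ends J) (Some v) {e \<in> F. ends e \<inter> J \<noteq> {}}"
proof -
  let ?F = "{e \<in> F. ends e \<inter> J \<noteq> {}}"
  have FE: "F \<subseteq> E" and deg: "\<forall>w\<in>V. degree_in F ends w = (if w = v then 3 else 1)"
    using F by (auto simp: v_matching_def)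
  have JV: "J \<subseteq> V - B" using odd_components_subset[OF J] .
  have "degree_in ?F (frag_ends ends J) (Some x) = (if Some x = Some v then 3 else 1)" if x: "x \<in> J" for x
  proof -
    have "{e \<in> ?F. x \<in> ends e} = {e \<in> F. x \<in> ends e}" using x by blast
    then have "degree_in ?F ends x = degree_in F ends x" by (simp add: degree_in_def)
    then show ?thesis using degree_frag_Some[OF x, of ?F ends] deg x JV by auto
  qed
  moreover have "degree_in ?F (frag_ends ends J) None = 1"
  proof -
    have "cut_edges ends ?F J = cut_edges ends F J"
      by (auto simp: cut_edges_def card_ends_Int_eq_1[OF mg] dest: subsetD[OF FE])
    moreover have "card (cut_edges ends F J) = 1"
    proof (rule card_cut_edges_barrier[OF mg bar FE _ _ J])
      show "\<forall>w\<in>V - B. odd (degree_in F ends w)" using deg by simp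
      have "b \<in> V" "b \<noteq> v" if "b \<in> B" for b
        using that bar v JV by (auto simp: barrier_def)
      then show "\<forall>b\<in>B. degree_in F ends b \<le> 1" using deg by simp
    qed
    moreover have "degree_in ?F (frag_ends ends J) None = card (cut_edges ends ?F J)"
      by (rule degree_frag_None[OF mg]) (use FE in auto)
    ultimately show ?thesis by simp
  qed
  ultimately show ?thesis using FE by (auto simp: v_matching_def frag_V_def frag_E_def)
qed

lemma cut_edges_singleton_at:
  assumes "multigraph V E ends" "F \<subseteq> E" "cut_edges ends F J = {e\<^sub>0}" "w \<notin> J"
  shows "{e \<in> F. w \<in> ends e \<and> ends e \<inter> J \<noteq> {}} = (if w \<in> ends e\<^sub>0 then {e\<^sub>0} else {})"
proof -
  have "e \<in> F \<and> w \<in> ends e \<and> ends e \<inter> J \<noteq> {} \<longleftrightarrow> e \<in> cut_edges ends F J \<and> w \<in> ends e" for e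
    using assms(2,4) card_ends_Int_eq_1[OF assms(1)] by (auto simp: cut_edges_def)
  then show ?thesis using assms(3) by auto
qed

lemma perfect_matching_cut_edges_singleton:
  assumes cub: "cubic V E ends" and conn: "three_connected V E ends"
    and bar: "barrier V E ends B" and J: "J \<in> odd_components V E ends B"
    and e\<^sub>0: "e\<^sub>0 \<in> E" "card (ends e\<^sub>0 \<inter> J) = 1"
  obtains M where "perfect_matching V E ends M" "cut_edges ends M J = {e\<^sub>0}"
proof -
  have mg: "multigraph V E ends" using cub by (simp add: cubic_def)
  obtain M where M: "perfect_matching V E ends M" "e\<^sub>0 \<in> M"
    using edge_in_perfect_matching[OF cub conn e\<^sub>0(1)] by blast
  have ME: "M \<subseteq> E" and degM: "\<forall>w\<in>V. degree_in M ends w = 1"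
    using M(1) by (auto simp: perfect_matching_def)
  have "card (cut_edges ends M J) = 1"
    by (rule card_cut_edges_barrier[OF mg bar ME _ _ J]) (use degM bar in \<open>auto simp: barrier_def\<close>)
  moreover have "e\<^sub>0 \<in> cut_edges ends M J" using M(2) e\<^sub>0(2) by (simp add: cut_edges_def)
  ultimately have "cut_edges ends M J = {e\<^sub>0}" by (metis card_1_singletonE singletonD)
  then show ?thesis using that M(1) by blast
qed

lemma v_matching_from_fragment:
  assumes cub: "cubic V E ends" and conn: "three_connected V E ends"
    and bar: "barrier V E ends B" and J: "J \<in> odd_components V E ends B" and v: "v \<in> J"
    and F': "v_matching (frag_V J) (frag_E E ends J) (frag_ends ends J) (Some v) F'"
  shows "\<exists>F. v_matching V E ends v F"
proof -
  have mg: "multigraph V E ends" using cub by (simp add: cubic_def)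
  have JV: "J \<subseteq> V - B" using odd_components_subset[OF J] .
  have F'E: "F' \<subseteq> E" and F'J: "\<forall>e\<in>F'. ends e \<inter> J \<noteq> {}"
    and deg': "\<forall>w\<in>frag_V J. degree_in F' (frag_ends ends J) w = (if w = Some v then 3 else 1)"
    using F' by (auto simp: v_matching_def frag_E_def)
  have "card (cut_edges ends F' J) = 1"
    using deg' degree_frag_None[OF mg F'E F'J] by (simp add: frag_V_def)
  then obtain e\<^sub>0 where cutF': "cut_edges ends F' J = {e\<^sub>0}" by (rule card_1_singletonE)
  then have e\<^sub>0: "e\<^sub>0 \<in> E" "card (ends e\<^sub>0 \<inter> J) = 1" using F'E by (auto simp: cut_edges_def)
  obtain M where M: "perfect_matching V E ends M" and cutM: "cut_edges ends M J = {e\<^sub>0}"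
    by (rule perfect_matching_cut_edges_singleton[OF cub conn bar J e\<^sub>0])
  have ME: "M \<subseteq> E" and degM: "\<forall>w\<in>V. degree_in M ends w = 1"
    using M by (auto simp: perfect_matching_def)
  define F where "F = F' \<union> {e \<in> M. ends e \<inter> J = {}}"
  have "degree_in F ends w = (if w = v then 3 else 1)" if w: "w \<in> V" for w
  proof (cases "w \<in> J")
    case True
    then have "{e \<in> F. w \<in> ends e} = {e \<in> F'. w \<in> ends e}" by (auto simp: F_def)
    then have "degree_in F ends w = degree_in F' (frag_ends ends J) (Some w)"
      unfolding degree_frag_Some[OF True] by (simp add: degree_in_def)
    then show ?thesis using deg' True by (simp add: frag_V_def)
  next
    case False
    have "{e \<in> F'. w \<in> ends e} = {e \<in> F'. w \<in> ends e \<and> ends e \<inter> J \<noteq> {}}" using F'J by blast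
    also have "\<dots> = {e \<in> M. w \<in> ends e \<and> ends e \<inter> J \<noteq> {}}"
      using cut_edges_singleton_at[OF mg F'E cutF' False] cut_edges_singleton_at[OF mg ME cutM False] by simp
    finally have "{e \<in> F. w \<in> ends e} = {e \<in> M. w \<in> ends e}" by (auto simp: F_def)
    then show ?thesis using degM w v False by (auto simp: degree_in_def)
  qed
  moreover have "F \<subseteq> E" using F'E ME by (auto simp: F_def)
  ultimately show ?thesis by (auto simp: v_matching_def)
qed

theorem lemma3p4:
  fixes V :: "'v set" and E :: "'e set" and ends :: "'e \<Rightarrow> 'v set"
    and B J :: "'v set" and v :: 'v
  assumes "cubic V E ends"
    and "three_connected V E ends"
    and "has_perfect_matching V E ends"
    and "barrier V E ends B"
    and "B \<noteq> {}"
    and "J \<in> odd_components V E ends B"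
    and "v \<in> J"
  shows "lambda_matchable V E ends v \<longleftrightarrow>
         lambda_matchable (frag_V J) (frag_E E ends J) (frag_ends ends J) (Some v)"
proof -
  have mg: "multigraph V E ends" using assms(1) by (simp add: cubic_def)
  have "v \<in> V" using odd_components_subset[OF assms(6)] assms(7) by blast
  moreover have "Some v \<in> frag_V J" using assms(7) by (simp add: frag_V_def)
  moreover note v_matching_fragment[OF mg assms(4,6,7)]
    and v_matching_from_fragment[OF assms(1,2,4,6,7)]
  ultimately show ?thesis unfolding lambda_matchable_def by blast
qed

end
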